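(* Consider a Why Query with the \texttt{SUM} aggregate, an attribute $X$ with filters $p_1,\dots,p_m$, a threshold $\varepsilon$, and a canonical predicate $P^C$. Then for every nonempty $P\subsetneq P^C$, $P$ is an actual cause and $\overline{P}=P^C\setminus P$ is a valid contingency for $P$, i.e. $\Delta(D-D_{\overline{P}}-D_P)\le\varepsilon<\Delta(D-D_{\overline{P}})$.
   Context: $D$ is a finite table of rows; $M$ is a numerical column; $s_1,s_2$ are disjoint sets of rows (sibling subspaces). $X$ is a categorical column with values $x_1,\dots,x_m$; filter $p_i$ is the condition $X=x_i$. A predicate is $P\subseteq\{p_1,\dots,p_m\}$, $D_P$ the set of rows whose $X$-value is in $P$; $D'-D''$ is set difference. For $D'\subseteq D$, $\Delta(D')=\sum_{t\in D'\cap s_1}t[M]-\sum_{t\in D'\cap s_2}t[M]$; $\Delta_i=\Delta(D_{p_i})$; $\Delta(D)>0$. $P$ is an actual cause if there is $\Gamma\subseteq\{p_1,\dots,p_m\}$ with $\Gamma\cap P=\emptyset$ (a valid contingency) such that $\Delta(D-D_\Gamma-D_P)\le\varepsilon<\Delta(D-D_\Gamma)$. Canonical predicate: order the filters so that $\Delta_1\ge\cdots\ge\Delta_m$ and let $j$ satisfy $\Delta(D)-\sum_{i=1}^{j}\Delta_i\le\varepsilon<\Delta(D)-\sum_{i=1}^{j-1}\Delta_i$; then $P^C=\{p_1,\dots,p_j\}$. *)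

theory Defs
  imports Complex_Main
begin

text \<open>Rows have type 'r, M :: 'r => real is the numerical column, X :: 'r => 'v the
categorical column, with values x 1, ..., x m. The filter p_i (X = x_i) is represented
by its index i in {1..m}; a predicate is a set of indices.\<close>

definition Dsel :: "('r \<Rightarrow> 'v) \<Rightarrow> (nat \<Rightarrow> 'v) \<Rightarrow> 'r set \<Rightarrow> nat set \<Rightarrow> 'r set" where
  "Dsel X x D P = {t \<in> D. \<exists>i\<in>P. X t = x i}"

definition Delta :: "('r \<Rightarrow> real) \<Rightarrow> 'r set \<Rightarrow> 'r set \<Rightarrow> 'r set \<Rightarrow> real" where
  "Delta M s1 s2 D' = (\<Sum>t\<in>D' \<inter> s1. M t) - (\<Sum>t\<in>D' \<inter> s2. M t)"

definition valid_contingency ::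
  "('r \<Rightarrow> real) \<Rightarrow> 'r set \<Rightarrow> 'r set \<Rightarrow> ('r \<Rightarrow> 'v) \<Rightarrow> (nat \<Rightarrow> 'v) \<Rightarrow> nat \<Rightarrow> 'r set
    \<Rightarrow> real \<Rightarrow> nat set \<Rightarrow> nat set \<Rightarrow> bool" where
  "valid_contingency M s1 s2 X x m D \<epsilon> \<Gamma> P \<longleftrightarrow>
     \<Gamma> \<subseteq> {1..m} \<and> \<Gamma> \<inter> P = {} \<and>
     Delta M s1 s2 (D - Dsel X x D \<Gamma> - Dsel X x D P) \<le> \<epsilon> \<and>
     \<epsilon> < Delta M s1 s2 (D - Dsel X x D \<Gamma>)"

definition actual_cause ::
  "('r \<Rightarrow> real) \<Rightarrow> 'r set \<Rightarrow> 'r set \<Rightarrow> ('r \<Rightarrow> 'v) \<Rightarrow> (nat \<Rightarrow> 'v) \<Rightarrow> nat \<Rightarrow> 'r set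
    \<Rightarrow> real \<Rightarrow> nat set \<Rightarrow> bool" where
  "actual_cause M s1 s2 X x m D \<epsilon> P \<longleftrightarrow>
     (\<exists>\<Gamma>. valid_contingency M s1 s2 X x m D \<epsilon> \<Gamma> P)"

definition canonical_predicate ::
  "('r \<Rightarrow> real) \<Rightarrow> 'r set \<Rightarrow> 'r set \<Rightarrow> ('r \<Rightarrow> 'v) \<Rightarrow> (nat \<Rightarrow> 'v) \<Rightarrow> nat \<Rightarrow> 'r set
    \<Rightarrow> real \<Rightarrow> nat set \<Rightarrow> bool" where
  "canonical_predicate M s1 s2 X x m D \<epsilon> PC \<longleftrightarrow>
     (\<exists>\<sigma> j. bij_betw \<sigma> {1..m} {1..m} \<and>
        (\<forall>a b. 1 \<le> a \<and> a \<le> b \<and> b \<le> m \<longrightarrow>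
           Delta M s1 s2 (Dsel X x D {\<sigma> b}) \<le> Delta M s1 s2 (Dsel X x D {\<sigma> a})) \<and>
        j \<in> {1..m} \<and>
        Delta M s1 s2 D - (\<Sum>i=1..j. Delta M s1 s2 (Dsel X x D {\<sigma> i})) \<le> \<epsilon> \<and>
        \<epsilon> < Delta M s1 s2 D - (\<Sum>i=1..<j. Delta M s1 s2 (Dsel X x D {\<sigma> i})) \<and>
        PC = \<sigma> ` {1..j})"

end

theory Submission
  imports Defs
begin

text \<open>Delta is additive over disjoint row sets, and filters with distinct values select
disjoint rows, so removing the rows of a predicate subtracts the sum of its per-filter
contributions. In the canonical order these contributions are non-increasing and the last
one is positive (it is what pushes Delta across the threshold). Removing all of the
canonical predicate therefore lands at or below the threshold, while a proper subset of it
misses some filter whose contribution is at least the last one, so it removes at most the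
first j - 1 contributions and stays above the threshold.\<close>

lemma Delta_Un_disjoint:
  assumes "finite A" "finite B" "A \<inter> B = {}"
  shows "Delta M s1 s2 (A \<union> B) = Delta M s1 s2 A + Delta M s1 s2 B"
proof -
  have "(\<Sum>t\<in>(A \<union> B) \<inter> s. M t) = (\<Sum>t\<in>A \<inter> s. M t) + (\<Sum>t\<in>B \<inter> s. M t)" for s
    using assms by (simp add: Int_Un_distrib2 sum.union_disjoint disjoint_iff)
  then show ?thesis
    unfolding Delta_def by simp
qed

lemma Delta_Diff:
  assumes "finite D" "A \<subseteq> D"
  shows "Delta M s1 s2 (D - A) = Delta M s1 s2 D - Delta M s1 s2 A"
proof -
  have "D = (D - A) \<union> A"
    using assms(2) by blast
  then have "Delta M s1 s2 D = Delta M s1 s2 (D - A) + Delta M s1 s2 A"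
    using assms by (metis Delta_Un_disjoint Diff_disjoint Int_commute finite_Diff finite_subset)
  then show ?thesis
    by simp
qed

lemma Dsel_subset: "Dsel X x D G \<subseteq> D"
  unfolding Dsel_def by blast

lemma Delta_Dsel_sum:
  assumes "finite D" "finite G" "inj_on x G"
  shows "Delta M s1 s2 (Dsel X x D G) = (\<Sum>i\<in>G. Delta M s1 s2 (Dsel X x D {i}))"
  using assms(2,3)
proof (induction G rule: finite_induct)
  case empty
  then show ?case
    by (simp add: Dsel_def Delta_def)
next
  case (insert i G)
  have "x i \<notin> x ` G"
    using insert.hyps(2) insert.prems by simp
  then have "Dsel X x D {i} \<inter> Dsel X x D G = {}"
    unfolding Dsel_def by (auto simp: image_iff)
  moreover have "Dsel X x D (insert i G) = Dsel X x D {i} \<union> Dsel X x D G"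
    unfolding Dsel_def by blast
  moreover have "finite (Dsel X x D H)" for H
    using assms(1) Dsel_subset finite_subset by metis
  ultimately have "Delta M s1 s2 (Dsel X x D (insert i G)) =
                    Delta M s1 s2 (Dsel X x D {i}) + Delta M s1 s2 (Dsel X x D G)"
    by (simp add: Delta_Un_disjoint)
  then show ?case
    using insert by simp
qed

lemma Delta_Diff_Dsel:
  assumes "finite D" "finite G" "inj_on x G"
  shows "Delta M s1 s2 (D - Dsel X x D G) =
           Delta M s1 s2 D - (\<Sum>i\<in>G. Delta M s1 s2 (Dsel X x D {i}))"
  using assms by (simp only: Delta_Diff Dsel_subset Delta_Dsel_sum)

lemma sum_subset_le_sum_initial_segment:
  fixes d :: "nat \<Rightarrow> real"
  assumes antitone: "\<And>a b. 1 \<le> a \<Longrightarrow> a \<le> b \<Longrightarrow> b \<le> j \<Longrightarrow> d b \<le> d a"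
    and "0 \<le> d j" and "A \<subseteq> {1..j}" and "l \<in> {1..j}" and "l \<notin> A"
  shows "(\<Sum>i\<in>A. d i) \<le> (\<Sum>i=1..<j. d i)"
proof -
  have nonneg: "0 \<le> d i" if "i \<in> {1..j}" for i
    using that antitone[of i j] \<open>0 \<le> d j\<close> by simp
  have "(\<Sum>i\<in>A. d i) \<le> (\<Sum>i\<in>{1..j} - {l}. d i)"
    using assms(3-5) nonneg by (intro sum_mono2) auto
  also have "\<dots> = (\<Sum>i=1..j. d i) - d l"
    using \<open>l \<in> {1..j}\<close> by (simp add: sum_diff1)
  also have "\<dots> \<le> (\<Sum>i=1..j. d i) - d j"
    using \<open>l \<in> {1..j}\<close> antitone[of l j] by simp
  also have "\<dots> = (\<Sum>i=1..<j. d i)"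
    using \<open>l \<in> {1..j}\<close> by (simp add: sum.last_plus)
  finally show ?thesis .
qed

lemma canonical_predicateE:
  assumes "finite D" "inj_on x {1..m}" "canonical_predicate M s1 s2 X x m D \<epsilon> PC"
  obtains \<sigma> j where "PC = \<sigma> ` {1..j::nat}" and "PC \<subseteq> {1..m}"
    and "\<And>a b. 1 \<le> a \<Longrightarrow> a \<le> b \<Longrightarrow> b \<le> j \<Longrightarrow>
           Delta M s1 s2 (Dsel X x D {\<sigma> b}) \<le> Delta M s1 s2 (Dsel X x D {\<sigma> a})"
    and "0 < Delta M s1 s2 (Dsel X x D {\<sigma> j})"
    and "Delta M s1 s2 D - (\<Sum>i=1..j. Delta M s1 s2 (Dsel X x D {\<sigma> i})) \<le> \<epsilon>"
    and "\<epsilon> < Delta M s1 s2 D - (\<Sum>i=1..<j. Delta M s1 s2 (Dsel X x D {\<sigma> i}))"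
    and "\<And>A. A \<subseteq> {1..j} \<Longrightarrow> Delta M s1 s2 (D - Dsel X x D (\<sigma> ` A)) =
           Delta M s1 s2 D - (\<Sum>i\<in>A. Delta M s1 s2 (Dsel X x D {\<sigma> i}))"
proof -
  let ?d = "\<lambda>i. Delta M s1 s2 (Dsel X x D {i})"
  obtain \<sigma> j where bij: "bij_betw \<sigma> {1..m} {1..m}"
    and antitone: "\<forall>a b. 1 \<le> a \<and> a \<le> b \<and> b \<le> m \<longrightarrow> ?d (\<sigma> b) \<le> ?d (\<sigma> a)"
    and "j \<in> {1..m}"
    and below: "Delta M s1 s2 D - (\<Sum>i=1..j. ?d (\<sigma> i)) \<le> \<epsilon>"
    and above: "\<epsilon> < Delta M s1 s2 D - (\<Sum>i=1..<j. ?d (\<sigma> i))"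
    and PC: "PC = \<sigma> ` {1..j}"
    using assms(3) unfolding canonical_predicate_def by blast
  have "{1..j} \<subseteq> {1..m}"
    using \<open>j \<in> {1..m}\<close> by auto
  then have inj_\<sigma>: "inj_on \<sigma> {1..j}" and "PC \<subseteq> {1..m}"
    using bij PC by (auto simp: bij_betw_def intro: inj_on_subset)
  have removal: "Delta M s1 s2 (D - Dsel X x D (\<sigma> ` A)) =
                   Delta M s1 s2 D - (\<Sum>i\<in>A. ?d (\<sigma> i))" if "A \<subseteq> {1..j}" for A
  proof -
    have "inj_on x (\<sigma> ` A)"
      using that PC \<open>PC \<subseteq> {1..m}\<close> assms(2) by (meson image_mono inj_on_subset subset_trans)
    then show ?thesis
      using that assms(1) inj_on_subset[OF inj_\<sigma>]
      by (simp add: Delta_Diff_Dsel sum.reindex finite_subset)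
  qed
  have "(\<Sum>i=1..j. ?d (\<sigma> i)) = (\<Sum>i=1..<j. ?d (\<sigma> i)) + ?d (\<sigma> j)"
    using \<open>j \<in> {1..m}\<close> by (simp add: sum.last_plus)
  then have last_pos: "0 < ?d (\<sigma> j)"
    using below above by linarith
  have antitone_j: "?d (\<sigma> b) \<le> ?d (\<sigma> a)" if "1 \<le> a" "a \<le> b" "b \<le> j" for a b
    using that \<open>j \<in> {1..m}\<close> antitone by simp
  show ?thesis
    by (rule that[OF PC \<open>PC \<subseteq> {1..m}\<close> antitone_j last_pos below above removal])
qed

lemma canonical_predicate_subset:
  assumes "finite D" "inj_on x {1..m}" "canonical_predicate M s1 s2 X x m D \<epsilon> PC"
  shows "PC \<subseteq> {1..m}"
  using canonical_predicateE[OF assms] by blast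

lemma canonical_predicate_Delta_Diff_le:
  assumes "finite D" "inj_on x {1..m}" "canonical_predicate M s1 s2 X x m D \<epsilon> PC"
  shows "Delta M s1 s2 (D - Dsel X x D PC) \<le> \<epsilon>"
  by (rule canonical_predicateE[OF assms]) simp

lemma canonical_predicate_Delta_Diff_psubset:
  assumes "finite D" "inj_on x {1..m}" "canonical_predicate M s1 s2 X x m D \<epsilon> PC"
    and "Q \<subset> PC"
  shows "\<epsilon> < Delta M s1 s2 (D - Dsel X x D Q)"
proof (rule canonical_predicateE[OF assms(1-3)])
  fix \<sigma> and j :: nat
  assume PC: "PC = \<sigma> ` {1..j}" and "PC \<subseteq> {1..m}"
    and antitone: "\<And>a b. 1 \<le> a \<Longrightarrow> a \<le> b \<Longrightarrow> b \<le> j \<Longrightarrow>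
           Delta M s1 s2 (Dsel X x D {\<sigma> b}) \<le> Delta M s1 s2 (Dsel X x D {\<sigma> a})"
    and last_pos: "0 < Delta M s1 s2 (Dsel X x D {\<sigma> j})"
    and "Delta M s1 s2 D - (\<Sum>i=1..j. Delta M s1 s2 (Dsel X x D {\<sigma> i})) \<le> \<epsilon>"
    and above: "\<epsilon> < Delta M s1 s2 D - (\<Sum>i=1..<j. Delta M s1 s2 (Dsel X x D {\<sigma> i}))"
    and removal: "\<And>A. A \<subseteq> {1..j} \<Longrightarrow> Delta M s1 s2 (D - Dsel X x D (\<sigma> ` A)) =
           Delta M s1 s2 D - (\<Sum>i\<in>A. Delta M s1 s2 (Dsel X x D {\<sigma> i}))"
  define A where "A = {i \<in> {1..j}. \<sigma> i \<in> Q}"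
  have "A \<subseteq> {1..j}"
    unfolding A_def by blast
  have "Q = \<sigma> ` A"
    using \<open>Q \<subset> PC\<close> unfolding A_def PC by blast
  obtain l where "l \<in> {1..j}" "\<sigma> l \<notin> Q"
    using \<open>Q \<subset> PC\<close> unfolding PC by blast
  then have "(\<Sum>i\<in>A. Delta M s1 s2 (Dsel X x D {\<sigma> i})) \<le>
               (\<Sum>i=1..<j. Delta M s1 s2 (Dsel X x D {\<sigma> i}))"
    using antitone last_pos \<open>A \<subseteq> {1..j}\<close>
    by (intro sum_subset_le_sum_initial_segment[where l = l]) (auto simp: A_def)
  then show ?thesis
    unfolding \<open>Q = \<sigma> ` A\<close> using above removal[OF \<open>A \<subseteq> {1..j}\<close>] by linarith
qed

theorem theorem3p17:
  fixes D s1 s2 :: "'r set" and M :: "'r \<Rightarrow> real" and X :: "'r \<Rightarrow> 'v"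
    and x :: "nat \<Rightarrow> 'v" and m :: nat and \<epsilon> :: real and PC P :: "nat set"
  assumes "finite D"
    and "s1 \<inter> s2 = {}"
    and "inj_on x {1..m}"
    and "\<forall>t\<in>D. X t \<in> x ` {1..m}"
    and "Delta M s1 s2 D > 0"
    and "canonical_predicate M s1 s2 X x m D \<epsilon> PC"
    and "P \<noteq> {}" and "P \<subset> PC"
  shows "actual_cause M s1 s2 X x m D \<epsilon> P \<and>
         valid_contingency M s1 s2 X x m D \<epsilon> (PC - P) P"
proof -
  note canonical = assms(1,3,6)
  have "PC - P \<subset> PC"
    using assms(7,8) by blast
  then have "\<epsilon> < Delta M s1 s2 (D - Dsel X x D (PC - P))"
    by (rule canonical_predicate_Delta_Diff_psubset[OF canonical])
  moreover have "D - Dsel X x D (PC - P) - Dsel X x D P = D - Dsel X x D PC"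
    using assms(8) unfolding Dsel_def by blast
  ultimately have "valid_contingency M s1 s2 X x m D \<epsilon> (PC - P) P"
    using canonical_predicate_Delta_Diff_le[OF canonical] canonical_predicate_subset[OF canonical]
    unfolding valid_contingency_def by auto
  then show ?thesis
    unfolding actual_cause_def by blast
qed

end
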